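(* Let $r>0$, $\mathbf{c}=(c_1,c_2,\dots,c_n)\in\mathbb{R}^n_{\ge0}$ and $\mathbf{c}'=(c_1,0,\dots,0)$. Then $$\mathrm{Vol}\big(C(\mathbf{0},1)\cap C(\mathbf{c},r)\big)\le \mathrm{Vol}\big(C(\mathbf{0},1)\cap C(\mathbf{c}',r)\big).$$
   Context: For $\mathbf{c}\in\mathbb{R}^n$, $r\ge 0$, $C(\mathbf{c},r)=\{\mathbf{x}\in\mathbb{R}^n:\|\mathbf{x}-\mathbf{c}\|_1\le r\}$. *)

theory Defs
  imports "HOL-Analysis.Analysis"
begin

definition cross_polytope :: "real ^ 'n \<Rightarrow> real \<Rightarrow> (real ^ 'n) set" where
  "cross_polytope c r = {x. (\<Sum>i\<in>UNIV. \<bar>x $ i - c $ i\<bar>) \<le> r}"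

end

theory Submission imports Defs begin

text \<open>Replacing a coordinate c_j of the centre by 0 cannot decrease the volume of
  C(0,\<rho>) \<inter> C(c,r): every line parallel to the j-th axis meets each cross-polytope in an interval,
  the one of C(0,\<rho>) and the one of the modified C(c,r) being concentric, and two concentric
  intervals overlap at least as much as two intervals of the same radii with different centres.
  Cavalieri's principle turns this into the volume inequality, and zeroing all coordinates other
  than k one after the other gives the theorem (for any centre c and radius r).\<close>

lemma emeasure_lborel_le_by_line_sections:
  fixes S T :: "'a::euclidean_space set" and e :: 'a
  assumes e: "e \<in> Basis" and S: "S \<in> sets borel" and T: "T \<in> sets borel"
    and sections_le: "\<And>v. emeasure lborel {t. v + t *\<^sub>R e \<in> S} \<le> emeasure lborel {t. v + t *\<^sub>R e \<in> T}"
  shows "emeasure lborel S \<le> emeasure lborel T"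
proof -
  interpret P: product_sigma_finite "\<lambda>_::'a. lborel::real measure"
    by standard
  have fin: "finite (Basis - {e})" "e \<notin> Basis - {e}" by auto
  have sum_meas: "(\<lambda>f. \<Sum>b\<in>Basis. f b *\<^sub>R b) \<in> borel_measurable (\<Pi>\<^sub>M b\<in>Basis. (lborel::real measure))"
    by measurable
  have cavalieri: "emeasure lborel X = (\<integral>\<^sup>+ g. emeasure lborel {t. (\<Sum>b\<in>Basis - {e}. g b *\<^sub>R b) + t *\<^sub>R e \<in> X} \<partial>(\<Pi>\<^sub>M b\<in>Basis - {e}. lborel))"
    if X: "X \<in> sets borel" for X
  proof -
    have "emeasure lborel X = (\<integral>\<^sup>+ x. indicator X x \<partial>lborel)"
      using X by simp
    also have "\<dots> = (\<integral>\<^sup>+ f. indicator X (\<Sum>b\<in>Basis. f b *\<^sub>R b) \<partial>(\<Pi>\<^sub>M b\<in>Basis. lborel))"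
      by (subst lborel_eq) (rule nn_integral_distr[OF sum_meas], rule borel_measurable_indicator, simp add: X)
    also have "\<dots> = (\<integral>\<^sup>+ f. indicator X (\<Sum>b\<in>Basis. f b *\<^sub>R b) \<partial>(\<Pi>\<^sub>M b\<in>insert e (Basis - {e}). lborel))"
      using e by (simp add: insert_absorb)
    also have "\<dots> = (\<integral>\<^sup>+ g. (\<integral>\<^sup>+ y. indicator X (\<Sum>b\<in>Basis. (g(e:=y)) b *\<^sub>R b) \<partial>lborel) \<partial>(\<Pi>\<^sub>M b\<in>Basis - {e}. lborel))"
      apply (rule P.product_nn_integral_insert[OF fin])
      using measurable_compose[OF sum_meas borel_measurable_indicator[OF X]] e by (simp add: insert_absorb)
    also have "\<dots> = (\<integral>\<^sup>+ g. emeasure lborel {t. (\<Sum>b\<in>Basis - {e}. g b *\<^sub>R b) + t *\<^sub>R e \<in> X} \<partial>(\<Pi>\<^sub>M b\<in>Basis - {e}. lborel))"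
    proof (rule nn_integral_cong)
      fix g
      have split: "(\<Sum>b\<in>Basis. (g(e:=y)) b *\<^sub>R b) = (\<Sum>b\<in>Basis - {e}. g b *\<^sub>R b) + y *\<^sub>R e" for y
        using e by (simp add: sum.remove[of Basis e])
      have "{t. (\<Sum>b\<in>Basis - {e}. g b *\<^sub>R b) + t *\<^sub>R e \<in> X} \<in> sets lborel"
        using X by measurable
      then show "(\<integral>\<^sup>+ y. indicator X (\<Sum>b\<in>Basis. (g(e:=y)) b *\<^sub>R b) \<partial>lborel)
          = emeasure lborel {t. (\<Sum>b\<in>Basis - {e}. g b *\<^sub>R b) + t *\<^sub>R e \<in> X}"
        unfolding split by (simp flip: nn_integral_indicator add: indicator_def)
    qed
    finally show ?thesis .
  qed
  show ?thesis
    unfolding cavalieri[OF S] cavalieri[OF T] by (rule nn_integral_mono, rule sections_le)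
qed

lemma emeasure_interval_inter_le_concentric:
  fixes p q a b :: real
  shows "emeasure lborel {t. \<bar>t + p\<bar> \<le> a \<and> \<bar>t + q\<bar> \<le> b}
       \<le> emeasure lborel {t. \<bar>t + p\<bar> \<le> a \<and> \<bar>t + p\<bar> \<le> b}"
proof -
  have "{t. \<bar>t + p\<bar> \<le> a \<and> \<bar>t + q\<bar> \<le> b} = {max (-a-p) (-b-q) .. min (a-p) (b-q)}"
    and "{t. \<bar>t + p\<bar> \<le> a \<and> \<bar>t + p\<bar> \<le> b} = {-(min a b)-p .. min a b - p}"
    by (auto simp: abs_le_iff)
  then show ?thesis
    by (simp only: emeasure_lborel_Icc_eq) (rule ennreal_leI, auto)
qed

lemma cross_polytope_line_section:
  fixes d v :: "real ^ 'n" and s :: real and j :: 'n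
  shows "{t. v + t *\<^sub>R axis j 1 \<in> cross_polytope d s}
       = {t. \<bar>t + (v $ j - d $ j)\<bar> \<le> s - (\<Sum>i\<in>-{j}. \<bar>v $ i - d $ i\<bar>)}"
proof -
  have "(\<Sum>i\<in>UNIV. \<bar>(v + t *\<^sub>R axis j 1) $ i - d $ i\<bar>)
      = \<bar>t + (v $ j - d $ j)\<bar> + (\<Sum>i\<in>-{j}. \<bar>v $ i - d $ i\<bar>)" for t
  proof -
    have "(\<Sum>i\<in>-{j}. \<bar>(v + t *\<^sub>R axis j 1) $ i - d $ i\<bar>) = (\<Sum>i\<in>-{j}. \<bar>v $ i - d $ i\<bar>)"
      by (rule sum.cong) (auto simp: axis_def)
    then show ?thesis
      by (simp add: sum.remove[of UNIV j] Compl_eq_Diff_UNIV axis_def algebra_simps)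
  qed
  then show ?thesis
    unfolding cross_polytope_def by (auto simp: algebra_simps)
qed

lemma closed_cross_polytope: "closed (cross_polytope d s)"
  unfolding cross_polytope_def by (intro closed_Collect_le continuous_intros)

lemma cross_polytope_subset_cball: "cross_polytope (d::real ^ 'n) s \<subseteq> cball d s"
proof
  fix x assume "x \<in> cross_polytope d s"
  then show "x \<in> cball d s"
    using norm_le_l1_cart[of "x - d"]
    by (simp add: cross_polytope_def dist_norm norm_minus_commute)
qed

lemma emeasure_cross_polytope_inter_le_zero_coord:
  fixes c :: "real ^ 'n" and j :: 'n
  shows "emeasure lborel (cross_polytope 0 \<rho> \<inter> cross_polytope c r)
       \<le> emeasure lborel (cross_polytope 0 \<rho> \<inter> cross_polytope (\<chi> i. if i = j then 0 else c $ i) r)"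
proof (rule emeasure_lborel_le_by_line_sections[of "axis j 1"])
  fix v :: "real ^ 'n"
  have same_rest: "(\<Sum>i\<in>-{j}. \<bar>v $ i - (\<chi> i. if i = j then 0 else c $ i) $ i\<bar>) = (\<Sum>i\<in>-{j}. \<bar>v $ i - c $ i\<bar>)"
    by (rule sum.cong) auto
  have section_Int: "{t. v + t *\<^sub>R axis j 1 \<in> cross_polytope 0 \<rho> \<inter> cross_polytope d r}
      = {t. t \<in> {t. v + t *\<^sub>R axis j 1 \<in> cross_polytope 0 \<rho>} \<and> t \<in> {t. v + t *\<^sub>R axis j 1 \<in> cross_polytope d r}}"
    for d :: "real ^ 'n"
    by simp
  show "emeasure lborel {t. v + t *\<^sub>R axis j 1 \<in> cross_polytope 0 \<rho> \<inter> cross_polytope c r}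
     \<le> emeasure lborel {t. v + t *\<^sub>R axis j 1 \<in> cross_polytope 0 \<rho> \<inter> cross_polytope (\<chi> i. if i = j then 0 else c $ i) r}"
    unfolding section_Int cross_polytope_line_section
    using emeasure_interval_inter_le_concentric by (simp add: same_rest)
qed (auto intro!: borel_closed closed_Int closed_cross_polytope)

lemma emeasure_cross_polytope_inter_le_zero_coords:
  fixes c :: "real ^ 'n" and J :: "'n set"
  shows "emeasure lborel (cross_polytope 0 \<rho> \<inter> cross_polytope c r)
       \<le> emeasure lborel (cross_polytope 0 \<rho> \<inter> cross_polytope (\<chi> i. if i \<in> J then 0 else c $ i) r)"
proof -
  have "finite J" by simp
  then show ?thesis
  proof (induction J rule: finite_induct)
    case empty
    then show ?case by (simp add: vec_nth_inverse)
  next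
    case (insert j J)
    have "(\<chi> i. if i \<in> insert j J then 0 else c $ i)
        = (\<chi> i. if i = j then 0 else (\<chi> i. if i \<in> J then 0 else c $ i) $ i)"
      by (simp add: vec_eq_iff)
    then show ?case
      using order_trans[OF insert.IH emeasure_cross_polytope_inter_le_zero_coord[where j = j]]
      by simp
  qed
qed

lemma measure_lebesgue_le_if_emeasure_lborel_le:
  fixes S T :: "'a::euclidean_space set"
  assumes "S \<in> sets borel" "T \<in> sets borel" "bounded T"
    and "emeasure lborel S \<le> emeasure lborel T"
  shows "measure lebesgue S \<le> measure lebesgue T"
  using assms emeasure_bounded_finite[OF \<open>bounded T\<close>]
  by (simp add: measure_def enn2real_mono)

theorem mainTheorem9:
  fixes c :: "real ^ 'n" and r :: real and k :: 'n
  assumes "r > 0"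
    and "\<forall>i. c $ i \<ge> 0"
  shows "measure lebesgue (cross_polytope 0 1 \<inter> cross_polytope c r)
         \<le> measure lebesgue (cross_polytope 0 1 \<inter>
               cross_polytope (\<chi> i. if i = k then c $ k else 0) r)"
proof (rule measure_lebesgue_le_if_emeasure_lborel_le)
  have "(\<chi> i. if i = k then c $ k else 0) = (\<chi> i. if i \<in> -{k} then 0 else c $ i)"
    by (simp add: vec_eq_iff)
  then show "emeasure lborel (cross_polytope 0 1 \<inter> cross_polytope c r)
      \<le> emeasure lborel (cross_polytope 0 1 \<inter> cross_polytope (\<chi> i. if i = k then c $ k else 0) r)"
    using emeasure_cross_polytope_inter_le_zero_coords[where J = "-{k}"] by simp
  show "bounded (cross_polytope 0 1 \<inter> cross_polytope (\<chi> i. if i = k then c $ k else 0) r)"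
    using cross_polytope_subset_cball by (blast intro: bounded_subset[OF bounded_cball])
qed (auto intro!: borel_closed closed_Int closed_cross_polytope)

end
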